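(* Let $\mathsf{K}$ be a variety, $\mathbf{B}\in\mathsf{K}$, and $\mathbf{A}\leq\mathbf{B}$ fully epic in $\mathsf{K}$. Then $\theta=\mathrm{Cg}^{\mathbf{B}}(\theta{\upharpoonright}_A)$ for every congruence $\theta$ of $\mathbf{B}$.
   Context: $\mathrm{Cg}^{\mathbf{B}}(X)$ is the least congruence of $\mathbf{B}$ containing $X\subseteq B\times B$; $\theta{\upharpoonright}_A=\theta\cap(A\times A)$. $\mathbf{A}\leq\mathbf{B}$ is epic in $\mathsf{K}$ if for all $\mathbf{C}\in\mathsf{K}$ and homomorphisms $g,h\colon\mathbf{B}\to\mathbf{C}$, $g{\upharpoonright}_A=h{\upharpoonright}_A$ implies $g=h$; it is full in $\mathsf{K}$ if it is proper, almost total ($B=\mathrm{Sg}^{\mathbf{B}}(A\cup\{b\})$ for some $b$), and every congruence $\theta\neq\mathrm{id}_B$ of $\mathbf{B}$ relates each $b\in B$ to some $a\in A$; fully epic means full and epic. *)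

theory Defs
  imports Main
begin

record ('f, 'a) ualg =
  ucarrier :: "'a set"
  uops :: "'f \<Rightarrow> 'a list \<Rightarrow> 'a"

definition is_alg :: "('f \<Rightarrow> nat) \<Rightarrow> ('f, 'a) ualg \<Rightarrow> bool" where
  "is_alg ar B \<longleftrightarrow> ucarrier B \<noteq> {} \<and>
     (\<forall>f xs. length xs = ar f \<and> set xs \<subseteq> ucarrier B \<longrightarrow> uops B f xs \<in> ucarrier B)"

datatype 'f trm = Var nat | App 'f "'f trm list"

fun wf_trm :: "('f \<Rightarrow> nat) \<Rightarrow> 'f trm \<Rightarrow> bool" where
  "wf_trm ar (Var n) = True"
| "wf_trm ar (App f ts) = (length ts = ar f \<and> list_all (wf_trm ar) ts)"

fun eval :: "('f, 'a) ualg \<Rightarrow> (nat \<Rightarrow> 'a) \<Rightarrow> 'f trm \<Rightarrow> 'a" where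
  "eval B \<sigma> (Var n) = \<sigma> n"
| "eval B \<sigma> (App f ts) = uops B f (map (eval B \<sigma>) ts)"

text \<open>A variety is presented (Birkhoff) as the class of models of a set E of identities
  between well-formed terms; membership of an algebra (of any carrier type) in it:\<close>

definition wf_eqs :: "('f \<Rightarrow> nat) \<Rightarrow> ('f trm \<times> 'f trm) set \<Rightarrow> bool" where
  "wf_eqs ar E \<longleftrightarrow> (\<forall>(s, t) \<in> E. wf_trm ar s \<and> wf_trm ar t)"

definition in_variety :: "('f \<Rightarrow> nat) \<Rightarrow> ('f trm \<times> 'f trm) set \<Rightarrow> ('f, 'a) ualg \<Rightarrow> bool" where
  "in_variety ar E C \<longleftrightarrow> is_alg ar C \<and>
     (\<forall>(s, t) \<in> E. \<forall>\<sigma>. (\<forall>n. \<sigma> n \<in> ucarrier C) \<longrightarrow> eval C \<sigma> s = eval C \<sigma> t)"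

definition subalg :: "('f \<Rightarrow> nat) \<Rightarrow> ('f, 'a) ualg \<Rightarrow> ('f, 'a) ualg \<Rightarrow> bool" where
  "subalg ar A B \<longleftrightarrow> is_alg ar A \<and> is_alg ar B \<and> ucarrier A \<subseteq> ucarrier B \<and>
     (\<forall>f xs. length xs = ar f \<and> set xs \<subseteq> ucarrier A \<longrightarrow> uops A f xs = uops B f xs)"

definition hom :: "('f \<Rightarrow> nat) \<Rightarrow> ('f, 'a) ualg \<Rightarrow> ('f, 'c) ualg \<Rightarrow> ('a \<Rightarrow> 'c) \<Rightarrow> bool" where
  "hom ar B C h \<longleftrightarrow> h ` ucarrier B \<subseteq> ucarrier C \<and>
     (\<forall>f xs. length xs = ar f \<and> set xs \<subseteq> ucarrier B \<longrightarrow> h (uops B f xs) = uops C f (map h xs))"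

definition is_con :: "('f \<Rightarrow> nat) \<Rightarrow> ('f, 'a) ualg \<Rightarrow> ('a \<times> 'a) set \<Rightarrow> bool" where
  "is_con ar B \<theta> \<longleftrightarrow> equiv (ucarrier B) \<theta> \<and>
     (\<forall>f xs ys. length xs = ar f \<and> length ys = ar f \<and> list_all2 (\<lambda>x y. (x, y) \<in> \<theta>) xs ys
        \<longrightarrow> (uops B f xs, uops B f ys) \<in> \<theta>)"

definition Cg :: "('f \<Rightarrow> nat) \<Rightarrow> ('f, 'a) ualg \<Rightarrow> ('a \<times> 'a) set \<Rightarrow> ('a \<times> 'a) set" where
  "Cg ar B X = \<Inter> {\<theta>. is_con ar B \<theta> \<and> X \<subseteq> \<theta>}"

definition Sg :: "('f \<Rightarrow> nat) \<Rightarrow> ('f, 'a) ualg \<Rightarrow> 'a set \<Rightarrow> 'a set" where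
  "Sg ar B X = \<Inter> {S. S \<subseteq> ucarrier B \<and> X \<subseteq> S \<and>
      (\<forall>f xs. length xs = ar f \<and> set xs \<subseteq> S \<longrightarrow> uops B f xs \<in> S)}"

definition restr :: "('a \<times> 'a) set \<Rightarrow> 'a set \<Rightarrow> ('a \<times> 'a) set" where
  "restr \<theta> A = \<theta> \<inter> (A \<times> A)"

text \<open>Epic / full subalgebras. Epicness quantifies over all algebras C of the variety;
  in HOL the carrier type of C must be fixed, so it is a parameter (given via an itself argument).\<close>

definition epic_in :: "('f \<Rightarrow> nat) \<Rightarrow> ('f trm \<times> 'f trm) set \<Rightarrow> 'c itself
                        \<Rightarrow> ('f, 'a) ualg \<Rightarrow> ('f, 'a) ualg \<Rightarrow> bool" where
  "epic_in ar E (T :: 'c itself) A B \<longleftrightarrow> subalg ar A B \<and>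
     (\<forall>(C :: ('f, 'c) ualg) g h. in_variety ar E C \<longrightarrow> hom ar B C g \<longrightarrow> hom ar B C h \<longrightarrow>
        (\<forall>a \<in> ucarrier A. g a = h a) \<longrightarrow> (\<forall>b \<in> ucarrier B. g b = h b))"

definition almost_total :: "('f \<Rightarrow> nat) \<Rightarrow> ('f, 'a) ualg \<Rightarrow> ('f, 'a) ualg \<Rightarrow> bool" where
  "almost_total ar A B \<longleftrightarrow> (\<exists>b \<in> ucarrier B. ucarrier B = Sg ar B (ucarrier A \<union> {b}))"

definition full_in :: "('f \<Rightarrow> nat) \<Rightarrow> ('f, 'a) ualg \<Rightarrow> ('f, 'a) ualg \<Rightarrow> bool" where
  "full_in ar A B \<longleftrightarrow> subalg ar A B \<and> ucarrier A \<noteq> ucarrier B \<and> almost_total ar A B \<and>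
     (\<forall>\<theta>. is_con ar B \<theta> \<and> \<theta> \<noteq> Id_on (ucarrier B) \<longrightarrow>
        (\<forall>b \<in> ucarrier B. \<exists>a \<in> ucarrier A. (b, a) \<in> \<theta>))"

end

theory Submission
  imports Defs
begin

text \<open>Put \<open>\<phi> = Cg(\<theta>|A)\<close>, so \<open>\<phi> \<subseteq> \<theta>\<close>. If \<open>\<phi>\<close> is not the identity, fullness makes every
  \<open>\<phi>\<close>-class meet \<open>A\<close>, and then \<open>\<theta> \<subseteq> \<phi>\<close> because \<open>\<theta>\<close> and \<open>\<phi>\<close> agree on \<open>A\<close>.
  If \<open>\<phi>\<close> is the identity but \<open>\<theta>\<close> is not, fullness makes every \<open>\<theta>\<close>-class meet \<open>A\<close> in exactly
  one point; sending \<open>b\<close> to that point is an endomorphism of \<open>B\<close> fixing \<open>A\<close>, so by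
  epicness it is the identity and \<open>A = B\<close>, contradicting properness.\<close>

lemma is_con_carrier_square:
  assumes "is_alg ar B"
  shows "is_con ar B (ucarrier B \<times> ucarrier B)"
proof -
  have "(uops B f xs, uops B f ys) \<in> ucarrier B \<times> ucarrier B"
    if "length xs = ar f" "length ys = ar f"
       "list_all2 (\<lambda>x y. (x, y) \<in> ucarrier B \<times> ucarrier B) xs ys" for f xs ys
  proof -
    from that(3) have "set xs \<subseteq> ucarrier B" "set ys \<subseteq> ucarrier B"
      by (auto simp: list_all2_conv_all_nth in_set_conv_nth)
    with that(1,2) assms show ?thesis by (simp add: is_alg_def)
  qed
  moreover have "equiv (ucarrier B) (ucarrier B \<times> ucarrier B)"
    by (auto simp: equiv_def refl_on_def sym_def trans_def)
  ultimately show ?thesis unfolding is_con_def by blast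
qed

lemma equiv_Inter:
  assumes "\<Theta> \<noteq> {}" "\<And>\<theta>. \<theta> \<in> \<Theta> \<Longrightarrow> equiv S \<theta>"
  shows "equiv S (\<Inter>\<Theta>)"
proof (rule equivI)
  show "\<Inter>\<Theta> \<subseteq> S \<times> S" using assms equiv_type by blast
  show "refl_on S (\<Inter>\<Theta>)" using assms(2) by (auto simp: equiv_def refl_on_def)
  show "sym (\<Inter>\<Theta>)" using assms(2) by (auto simp: equiv_def sym_def)
  show "trans (\<Inter>\<Theta>)" using assms(2) unfolding equiv_def trans_def by blast
qed

lemma is_con_Inter:
  assumes "\<Theta> \<noteq> {}" "\<And>\<theta>. \<theta> \<in> \<Theta> \<Longrightarrow> is_con ar B \<theta>"
  shows "is_con ar B (\<Inter>\<Theta>)"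
proof -
  have "equiv (ucarrier B) (\<Inter>\<Theta>)"
    using assms by (intro equiv_Inter) (auto simp: is_con_def)
  moreover have "(uops B f xs, uops B f ys) \<in> \<theta>"
    if "\<theta> \<in> \<Theta>" "length xs = ar f" "length ys = ar f"
       "list_all2 (\<lambda>x y. (x, y) \<in> \<Inter>\<Theta>) xs ys" for \<theta> f xs ys
  proof -
    have "list_all2 (\<lambda>x y. (x, y) \<in> \<theta>) xs ys"
      using that(1,4) by (auto elim!: list_all2_mono)
    then show ?thesis
      using assms(2)[OF that(1)] that(2,3) by (simp add: is_con_def)
  qed
  ultimately show ?thesis by (auto simp: is_con_def)
qed

lemma is_con_Cg:
  assumes "is_alg ar B" "X \<subseteq> ucarrier B \<times> ucarrier B"
  shows "is_con ar B (Cg ar B X)"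
  unfolding Cg_def
  using is_con_carrier_square[OF assms(1)] assms(2) by (intro is_con_Inter) auto

lemma subset_Cg: "X \<subseteq> Cg ar B X"
  by (auto simp: Cg_def)

lemma Cg_least: "is_con ar B \<theta> \<Longrightarrow> X \<subseteq> \<theta> \<Longrightarrow> Cg ar B X \<subseteq> \<theta>"
  by (auto simp: Cg_def)

lemma equiv_subset_if_classes_meet:
  assumes "equiv S \<theta>" "equiv S \<phi>" "\<phi> \<subseteq> \<theta>" "restr \<theta> A \<subseteq> \<phi>"
    and meet: "\<forall>b \<in> S. \<exists>a \<in> A. (b, a) \<in> \<phi>"
  shows "\<theta> \<subseteq> \<phi>"
proof clarify
  fix x y assume xy: "(x, y) \<in> \<theta>"
  then have "x \<in> S" "y \<in> S" using assms(1) by (auto simp: equiv_def refl_on_def)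
  then obtain a a' where a: "a \<in> A" "(x, a) \<in> \<phi>" and a': "a' \<in> A" "(y, a') \<in> \<phi>"
    using meet by blast
  have "(a, a') \<in> \<theta>"
    using xy a(2) a'(2) assms(1,3) unfolding equiv_def sym_def trans_def by blast
  then have "(a, a') \<in> \<phi>" using a(1) a'(1) assms(4) by (auto simp: restr_def)
  then show "(x, y) \<in> \<phi>"
    using a(2) a'(2) assms(2) unfolding equiv_def sym_def trans_def by blast
qed

lemma con_retraction:
  assumes con: "is_con ar B \<theta>" and sub: "subalg ar A B"
    and diag: "restr \<theta> (ucarrier A) \<subseteq> Id"
    and meet: "\<forall>b \<in> ucarrier B. \<exists>a \<in> ucarrier A. (b, a) \<in> \<theta>"
  obtains r where "hom ar B B r" "\<forall>a \<in> ucarrier A. r a = a" "\<forall>b \<in> ucarrier B. r b \<in> ucarrier A"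
proof -
  have eqt: "equiv (ucarrier B) \<theta>" using con by (simp add: is_con_def)
  have AB: "ucarrier A \<subseteq> ucarrier B" using sub by (simp add: subalg_def)
  define r where "r b = (SOME a. a \<in> ucarrier A \<and> (b, a) \<in> \<theta>)" for b
  have r: "r b \<in> ucarrier A \<and> (b, r b) \<in> \<theta>" if "b \<in> ucarrier B" for b
    unfolding r_def using meet that by (metis (no_types, lifting) someI_ex)
  have r_unique: "r b = a" if "b \<in> ucarrier B" "a \<in> ucarrier A" "(b, a) \<in> \<theta>" for b a
  proof -
    have "(r b, a) \<in> \<theta>"
      using r[OF that(1)] that(3) eqt unfolding equiv_def sym_def trans_def by blast
    then show ?thesis using diag r[OF that(1)] that(2) by (auto simp: restr_def)
  qed
  have "hom ar B B r"
    unfolding hom_def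
  proof (intro conjI allI impI)
    show "r ` ucarrier B \<subseteq> ucarrier B" using r AB by auto
    fix f xs assume xs: "length xs = ar f \<and> set xs \<subseteq> ucarrier B"
    have rxs: "set (map r xs) \<subseteq> ucarrier A" using xs r by auto
    have "list_all2 (\<lambda>x y. (x, y) \<in> \<theta>) xs (map r xs)"
      using xs r by (auto simp: list_all2_conv_all_nth subset_code(1))
    then have "(uops B f xs, uops B f (map r xs)) \<in> \<theta>"
      using con xs by (simp add: is_con_def)
    moreover have "uops B f (map r xs) = uops A f (map r xs)" "uops A f (map r xs) \<in> ucarrier A"
      using sub rxs xs by (auto simp: subalg_def is_alg_def)
    moreover have "uops B f xs \<in> ucarrier B"
      using sub xs by (auto simp: subalg_def is_alg_def)
    ultimately show "r (uops B f xs) = uops B f (map r xs)"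
      using r_unique by metis
  qed
  moreover have "\<forall>a \<in> ucarrier A. r a = a"
    using r_unique AB eqt by (auto simp: equiv_def refl_on_def)
  ultimately show thesis using that r by blast
qed

text \<open>Epicness is only available against algebras with carrier type \<open>'a set\<close>, so \<open>B\<close> is
  tested through its isomorphic copy on singletons.\<close>

definition sing_alg :: "('f, 'a) ualg \<Rightarrow> ('f, 'a set) ualg" where
  "sing_alg B = \<lparr>ucarrier = (\<lambda>x. {x}) ` ucarrier B, uops = (\<lambda>f xs. {uops B f (map the_elem xs)})\<rparr>"

lemma eval_sing_alg:
  assumes "\<forall>n. \<sigma> n \<in> ucarrier (sing_alg B)"
  shows "eval (sing_alg B) \<sigma> t = {eval B (the_elem \<circ> \<sigma>) t}"
proof (induction t)
  case (Var n)
  from assms obtain x where "\<sigma> n = {x}" by (auto simp: sing_alg_def)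
  then show ?case by simp
next
  case (App f ts)
  then have "map (the_elem \<circ> eval (sing_alg B) \<sigma>) ts = map (eval B (the_elem \<circ> \<sigma>)) ts"
    by (auto simp: comp_def)
  moreover have "eval (sing_alg B) \<sigma> (App f ts) = {uops B f (map (the_elem \<circ> eval (sing_alg B) \<sigma>) ts)}"
    by (simp add: sing_alg_def)
  ultimately show ?case by (metis eval.simps(2))
qed

lemma in_variety_sing_alg:
  assumes "in_variety ar E B"
  shows "in_variety ar E (sing_alg B)"
proof -
  have alg: "is_alg ar B" using assms by (simp add: in_variety_def)
  have "set (map the_elem xs) \<subseteq> ucarrier B" if "set xs \<subseteq> ucarrier (sing_alg B)" for xs
    using that by (auto simp: sing_alg_def)
  then have "is_alg ar (sing_alg B)"
    using alg by (fastforce simp: is_alg_def sing_alg_def)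
  moreover have "eval (sing_alg B) \<sigma> s = eval (sing_alg B) \<sigma> t"
    if "(s, t) \<in> E" and \<sigma>: "\<forall>n. \<sigma> n \<in> ucarrier (sing_alg B)" for s t \<sigma>
  proof -
    have "(the_elem \<circ> \<sigma>) n \<in> ucarrier B" for n
      using \<sigma>[rule_format, of n] by (auto simp: sing_alg_def)
    then have "eval B (the_elem \<circ> \<sigma>) s = eval B (the_elem \<circ> \<sigma>) t"
      using assms that(1) by (auto simp: in_variety_def)
    then show ?thesis using eval_sing_alg[OF \<sigma>] by simp
  qed
  ultimately show ?thesis by (auto simp: in_variety_def)
qed

lemma hom_sing_alg:
  assumes "hom ar B B h"
  shows "hom ar B (sing_alg B) (\<lambda>x. {h x})"
  using assms by (auto simp: hom_def sing_alg_def comp_def)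

lemma hom_id: "hom ar B B id"
  by (simp add: hom_def)

lemma epic_in_endo_eq:
  fixes A B :: "('f, 'a) ualg"
  assumes "epic_in ar E TYPE('a set) A B" "in_variety ar E B"
    and "hom ar B B g" "hom ar B B h" "\<forall>a \<in> ucarrier A. g a = h a"
  shows "\<forall>b \<in> ucarrier B. g b = h b"
proof -
  have "\<forall>a \<in> ucarrier A. {g a} = {h a}" using assms(5) by simp
  then have "\<forall>b \<in> ucarrier B. {g b} = {h b}"
    using assms(1) in_variety_sing_alg[OF assms(2)]
      hom_sing_alg[OF assms(3)] hom_sing_alg[OF assms(4)]
    unfolding epic_in_def by blast
  then show ?thesis by simp
qed

lemma epic_in_no_proper_retraction:
  fixes A B :: "('f, 'a) ualg"
  assumes "epic_in ar E TYPE('a set) A B" "in_variety ar E B"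
    and "ucarrier A \<noteq> ucarrier B" "ucarrier A \<subseteq> ucarrier B"
    and "hom ar B B r" "\<forall>a \<in> ucarrier A. r a = a" "\<forall>b \<in> ucarrier B. r b \<in> ucarrier A"
  shows False
proof -
  have "\<forall>b \<in> ucarrier B. r b = id b"
    using assms(6) by (intro epic_in_endo_eq[OF assms(1,2,5) hom_id]) simp
  then show False using assms(3,4,7) by auto
qed

theorem mainTheorem13:
  fixes ar :: "'f \<Rightarrow> nat"
    and E :: "('f trm \<times> 'f trm) set"
    and A B :: "('f, 'b) ualg"
  assumes "wf_eqs ar E"
    and "in_variety ar E B"
    and "full_in ar A B"
    and "epic_in ar E TYPE('b set) A B"
  shows "\<forall>\<theta>. is_con ar B \<theta> \<longrightarrow> \<theta> = Cg ar B (restr \<theta> (ucarrier A))"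
proof (intro allI impI)
  fix \<theta> assume con: "is_con ar B \<theta>"
  define \<phi> where "\<phi> = Cg ar B (restr \<theta> (ucarrier A))"
  have sub: "subalg ar A B" and proper: "ucarrier A \<noteq> ucarrier B"
    and full: "\<And>\<psi>. is_con ar B \<psi> \<Longrightarrow> \<psi> \<noteq> Id_on (ucarrier B) \<Longrightarrow>
                 \<forall>b \<in> ucarrier B. \<exists>a \<in> ucarrier A. (b, a) \<in> \<psi>"
    using assms(3) by (auto simp: full_in_def)
  have "restr \<theta> (ucarrier A) \<subseteq> ucarrier B \<times> ucarrier B"
    using con by (auto simp: restr_def is_con_def equiv_def refl_on_def)
  then have con_\<phi>: "is_con ar B \<phi>"
    unfolding \<phi>_def using assms(2) by (intro is_con_Cg) (simp_all add: in_variety_def)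
  have restr_\<phi>: "restr \<theta> (ucarrier A) \<subseteq> \<phi>"
    unfolding \<phi>_def by (rule subset_Cg)
  have \<phi>_\<theta>: "\<phi> \<subseteq> \<theta>"
    unfolding \<phi>_def by (rule Cg_least[OF con]) (simp add: restr_def)
  show "\<theta> = \<phi>"
  proof (cases "\<phi> = Id_on (ucarrier B)")
    case False
    have "equiv (ucarrier B) \<theta>" "equiv (ucarrier B) \<phi>"
      using con con_\<phi> by (simp_all add: is_con_def)
    then have "\<theta> \<subseteq> \<phi>"
      using \<phi>_\<theta> restr_\<phi> full[OF con_\<phi> False] by (rule equiv_subset_if_classes_meet)
    with \<phi>_\<theta> show ?thesis by blast
  next
    case True
    have "\<theta> = Id_on (ucarrier B)"
    proof (rule ccontr)
      assume "\<theta> \<noteq> Id_on (ucarrier B)"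
      moreover have "restr \<theta> (ucarrier A) \<subseteq> Id" using restr_\<phi> True by auto
      ultimately obtain r where "hom ar B B r" "\<forall>a \<in> ucarrier A. r a = a"
          "\<forall>b \<in> ucarrier B. r b \<in> ucarrier A"
        using con_retraction[OF con sub] full[OF con] by blast
      then show False
        using epic_in_no_proper_retraction[OF assms(4,2) proper] sub by (auto simp: subalg_def)
    qed
    with True show ?thesis by simp
  qed
qed

end
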